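(* In a combinatorial auction where all bidders play piecewise constant strategies, suppose there is a constant $c\in\mathbb{R}_{\ge0}$ such that every bid $b_j(K)$ of every bidder $j$ on every bundle $K$ (that occurs with positive probability) is an integer multiple of $c$. Then for every bidder $i$, all coordinates of all cell vertices of bidder $i$'s action space are integer multiples of $c$.
   Context: A combinatorial auction sells goods $M$ to bidders $N$; each bidder $i$ bids a vector $b_i\in\mathbb{R}_{\ge0}^r$ on his $r$ bundles of interest (other bundles bid $0$). An allocation gives each bidder one bundle of interest or $\emptyset$, pairwise disjoint; $X(b)$ is the set of allocations maximizing $\sum_i b_i(x_i)$. Bidders' valuations are independent random variables $V_j$ and a strategy $s_j$ maps valuations to bids; it is piecewise constant if it takes finitely many values, so the distribution of $b_{-i}=s_{-i}(V_{-i})$ has finite support. A cell of bidder $i$'s action space $\mathbb{R}_{\ge0}^r$ is a connected region $S$ such that for every $b_{-i}$ with positive probability there exists an allocation $x$ with $x\in X(b_i,b_{-i})$ for all $b_i\in S$; cells are convex polytopes and cell vertices are their vertices. *)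

theory Defs
  imports "HOL-Analysis.Analysis" "HOL-Probability.Probability_Mass_Function"
begin

text \<open>Bidders N, goods M; bidder j's r bundles of interest are K j k for k :: 'r.  An allocation assigns to each bidder either
  one of his bundles of interest (Some k) or the empty bundle (None).\<close>

definition is_allocation :: "'n set \<Rightarrow> ('n \<Rightarrow> 'r \<Rightarrow> 'g set) \<Rightarrow> ('n \<Rightarrow> 'r option) \<Rightarrow> bool" where
  "is_allocation N K x \<longleftrightarrow>
     (\<forall>j. j \<notin> N \<longrightarrow> x j = None) \<and>
     (\<forall>j\<in>N. \<forall>l\<in>N. \<forall>k k'. j \<noteq> l \<longrightarrow> x j = Some k \<longrightarrow> x l = Some k' \<longrightarrow> K j k \<inter> K l k' = {})"

definition alloc_value :: "'n set \<Rightarrow> ('n \<Rightarrow> real^'r) \<Rightarrow> ('n \<Rightarrow> 'r option) \<Rightarrow> real" where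
  "alloc_value N b x = (\<Sum>j\<in>N. case x j of None \<Rightarrow> 0 | Some k \<Rightarrow> b j $ k)"

definition opt_allocs :: "'n set \<Rightarrow> ('n \<Rightarrow> 'r \<Rightarrow> 'g set) \<Rightarrow> ('n \<Rightarrow> real^'r) \<Rightarrow> ('n \<Rightarrow> 'r option) set" where
  "opt_allocs N K b = {x. is_allocation N K x \<and>
     (\<forall>y. is_allocation N K y \<longrightarrow> alloc_value N b y \<le> alloc_value N b x)}"

definition nonneg_orthant :: "(real^'r) set" where
  "nonneg_orthant = {v. \<forall>k. 0 \<le> v $ k}"

text \<open>D j is the distribution of bidder j's bid s_j(V_j) (finite support for piecewise
  constant strategies).  By independence, b_{-i} has positive probability iff
  b j \<in> set_pmf (D j) for all j \<in> N - {i}.\<close>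
definition good_region :: "'n set \<Rightarrow> ('n \<Rightarrow> 'r \<Rightarrow> 'g set) \<Rightarrow> ('n \<Rightarrow> (real^'r) pmf) \<Rightarrow> 'n \<Rightarrow> (real^'r) set \<Rightarrow> bool" where
  "good_region N K D i S \<longleftrightarrow> S \<subseteq> nonneg_orthant \<and> connected S \<and>
     (\<forall>bo. (\<forall>j\<in>N - {i}. bo j \<in> set_pmf (D j)) \<longrightarrow>
        (\<exists>x. \<forall>v\<in>S. x \<in> opt_allocs N K (bo(i := v))))"

definition is_cell :: "'n set \<Rightarrow> ('n \<Rightarrow> 'r \<Rightarrow> 'g set) \<Rightarrow> ('n \<Rightarrow> (real^'r) pmf) \<Rightarrow> 'n \<Rightarrow> (real^'r) set \<Rightarrow> bool" where
  "is_cell N K D i S \<longleftrightarrow> S \<noteq> {} \<and> good_region N K D i S \<and>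
     (\<forall>T. good_region N K D i T \<and> S \<subseteq> T \<longrightarrow> T = S)"

definition cell_vertex :: "'n set \<Rightarrow> ('n \<Rightarrow> 'r \<Rightarrow> 'g set) \<Rightarrow> ('n \<Rightarrow> (real^'r) pmf) \<Rightarrow> 'n \<Rightarrow> real^'r \<Rightarrow> bool" where
  "cell_vertex N K D i p \<longleftrightarrow> (\<exists>S. is_cell N K D i S \<and> p extreme_point_of S)"

end

theory Submission imports Defs begin

(* By maximality, a cell of bidder i is the intersection of the nonnegative orthant with
   half-spaces  v(x_i) - v(y_i) >= W(y) - W(x),  where W is the welfare of the other bidders;
   so it is convex, and the right-hand sides lie in cZ.  Hence the cell is mapped into itself
   by every coordinatewise map f that is monotone, fixes 0 and commutes with translations by cZ.
   The maps  t |-> t +- dist(t, cZ)/2  are of this kind, average to the identity and differ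
   at every t outside cZ; so a point of the cell with a coordinate outside cZ is the midpoint
   of two distinct points of the cell and not an extreme point. *)

definition int_multiples :: "real \<Rightarrow> real set" where
  "int_multiples c = range (\<lambda>z::int. of_int z * c)"

lemma mem_int_multiples_iff: "x \<in> int_multiples c \<longleftrightarrow> (\<exists>z::int. x = of_int z * c)"
  by (auto simp: int_multiples_def)

lemma zero_in_int_multiples [simp]: "0 \<in> int_multiples c"
  unfolding int_multiples_def by (rule range_eqI[where x = 0]) simp

lemma int_multiples_add:
  "x \<in> int_multiples c \<Longrightarrow> y \<in> int_multiples c \<Longrightarrow> x + y \<in> int_multiples c"
  by (auto simp: mem_int_multiples_iff) (metis distrib_right of_int_add)

lemma int_multiples_diff:
  "x \<in> int_multiples c \<Longrightarrow> y \<in> int_multiples c \<Longrightarrow> x - y \<in> int_multiples c"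
  by (auto simp: mem_int_multiples_iff) (metis left_diff_distrib of_int_diff)

lemma sum_in_int_multiples:
  "(\<And>j. j \<in> A \<Longrightarrow> f j \<in> int_multiples c) \<Longrightarrow> sum f A \<in> int_multiples c"
  by (induction A rule: infinite_finite_induct) (auto intro: int_multiples_add)

lemma translate_int_multiples:
  assumes "a \<in> int_multiples c"
  shows "(+) a ` int_multiples c = int_multiples c"
proof
  show "(+) a ` int_multiples c \<subseteq> int_multiples c"
    using assms int_multiples_add by blast
  show "int_multiples c \<subseteq> (+) a ` int_multiples c"
  proof
    fix x assume "x \<in> int_multiples c"
    then have "x - a \<in> int_multiples c" using assms by (rule int_multiples_diff)
    then show "x \<in> (+) a ` int_multiples c" by (intro image_eqI[of _ _ "x - a"]) auto
  qed
qed

lemma closed_int_multiples: "closed (int_multiples c)"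
proof (cases "c = 0")
  case True
  then have "int_multiples c = {0}" by (auto simp: int_multiples_def)
  then show ?thesis by simp
next
  case False
  have "int_multiples c = (\<lambda>t. t * c) ` \<int>"
    by (auto simp: int_multiples_def Ints_def)
  moreover have "inj (\<lambda>t::real. t * c)" using False by (auto intro: injI)
  moreover have "linear (\<lambda>t::real. t * c)"
    by (simp add: bounded_linear_mult_left bounded_linear.linear)
  ultimately show ?thesis
    using closed_injective_linear_image[OF closed_Ints, of "\<lambda>t. t * c"] by simp
qed

lemma infdist_translate:
  fixes x a :: "'a::real_normed_vector"
  shows "infdist (x + a) ((+) a ` A) = infdist x A"
  by (simp add: infdist_def image_image dist_norm algebra_simps)

definition lattice_perturb :: "real \<Rightarrow> real \<Rightarrow> real \<Rightarrow> real" where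
  "lattice_perturb c s x = x + s * infdist x (int_multiples c) / 2"

lemma mono_lattice_perturb:
  assumes "\<bar>s\<bar> \<le> 1"
  shows "mono (lattice_perturb c s)"
proof
  fix x y :: real assume "x \<le> y"
  let ?d = "\<bar>infdist y (int_multiples c) - infdist x (int_multiples c)\<bar>"
  have "\<bar>s\<bar> * ?d \<le> ?d"
    using assms by (simp add: mult_left_le_one_le)
  also have "?d \<le> y - x"
    using infdist_triangle_abs[of y "int_multiples c" x] \<open>x \<le> y\<close> by (simp add: dist_real_def)
  finally have "\<bar>s * (infdist y (int_multiples c) - infdist x (int_multiples c))\<bar> \<le> y - x"
    by (simp add: abs_mult)
  then show "lattice_perturb c s x \<le> lattice_perturb c s y"
    unfolding lattice_perturb_def by (simp add: algebra_simps abs_le_iff)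
qed

lemma lattice_perturb_zero [simp]: "lattice_perturb c s 0 = 0"
  by (simp add: lattice_perturb_def)

lemma lattice_perturb_add:
  assumes "a \<in> int_multiples c"
  shows "lattice_perturb c s (x + a) = lattice_perturb c s x + a"
  using infdist_translate[of x a "int_multiples c"]
  by (simp add: lattice_perturb_def translate_int_multiples[OF assms])

lemma lattice_perturb_sum: "lattice_perturb c 1 x + lattice_perturb c (-1) x = 2 * x"
  by (simp add: lattice_perturb_def)

lemma lattice_perturb_neq:
  assumes "x \<notin> int_multiples c"
  shows "lattice_perturb c 1 x \<noteq> lattice_perturb c (-1) x"
proof -
  have "infdist x (int_multiples c) > 0"
    using infdist_pos_not_in_closed[OF closed_int_multiples _ assms] zero_in_int_multiples
    by (metis empty_iff)
  then show ?thesis by (simp add: lattice_perturb_def)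
qed

definition bid_on :: "real^'r \<Rightarrow> 'r option \<Rightarrow> real" where
  "bid_on v a = (case a of None \<Rightarrow> 0 | Some k \<Rightarrow> v $ k)"

lemma linear_bid_on: "linear (\<lambda>v. bid_on v a)"
  by (cases a) (simp_all add: bid_on_def bounded_linear.linear[OF bounded_linear_vec_nth] linear_zero)

lemma alloc_value_update:
  assumes "finite N" "i \<in> N"
  shows "alloc_value N (b(i := v)) x = alloc_value (N - {i}) b x + bid_on v (x i)"
proof -
  have "alloc_value N (b(i := v)) x = bid_on v (x i) + alloc_value (N - {i}) (b(i := v)) x"
    unfolding alloc_value_def bid_on_def by (simp add: sum.remove[OF assms] split: option.split)
  also have "alloc_value (N - {i}) (b(i := v)) x = alloc_value (N - {i}) b x"
    unfolding alloc_value_def by (intro sum.cong) (auto split: option.split)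
  finally show ?thesis by (simp only: add.commute)
qed

lemma alloc_value_in_int_multiples:
  assumes "\<And>j k. j \<in> A \<Longrightarrow> b j $ k \<in> int_multiples c"
  shows "alloc_value A b x \<in> int_multiples c"
  unfolding alloc_value_def
  by (intro sum_in_int_multiples) (auto split: option.split simp: assms)

lemma convex_opt_allocs_region:
  assumes "finite N" "i \<in> N"
  shows "convex {v. x \<in> opt_allocs N K (b(i := v))}"
proof -
  let ?others = "\<lambda>y. alloc_value (N - {i}) b y"
  let ?halfspace = "\<lambda>y. (\<lambda>v. bid_on v (y i) - bid_on v (x i)) -` {..?others x - ?others y}"
  have "{v. x \<in> opt_allocs N K (b(i := v))} =
      {v. is_allocation N K x} \<inter> (\<Inter>y\<in>Collect (is_allocation N K). ?halfspace y)"
    by (auto simp: opt_allocs_def alloc_value_update[OF assms] algebra_simps)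
  moreover have "convex (?halfspace y)" for y
    by (intro convex_linear_vimage linear_compose_sub linear_bid_on) simp
  ultimately show ?thesis by (simp add: convex_INT convex_Int)
qed

lemma opt_allocs_map_bid:
  fixes f :: "real \<Rightarrow> real"
  assumes "finite N" "i \<in> N" "mono f" "f 0 = 0"
    and f_add: "\<And>x a. a \<in> int_multiples c \<Longrightarrow> f (x + a) = f x + a"
    and others: "\<And>j k. j \<in> N - {i} \<Longrightarrow> b j $ k \<in> int_multiples c"
    and x: "x \<in> opt_allocs N K (b(i := v))"
  shows "x \<in> opt_allocs N K (b(i := \<chi> k. f (v $ k)))"
proof -
  note split = alloc_value_update[OF \<open>finite N\<close> \<open>i \<in> N\<close>]
  have bid_on_map: "bid_on (\<chi> k. f (v $ k)) a = f (bid_on v a)" for a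
    by (cases a) (simp_all add: bid_on_def \<open>f 0 = 0\<close>)
  have "alloc_value N (b(i := \<chi> k. f (v $ k))) y \<le> alloc_value N (b(i := \<chi> k. f (v $ k))) x"
    if "is_allocation N K y" for y
  proof -
    define d where "d = alloc_value (N - {i}) b x - alloc_value (N - {i}) b y"
    have d: "d \<in> int_multiples c"
      unfolding d_def using others by (intro int_multiples_diff alloc_value_in_int_multiples)
    have "bid_on v (y i) \<le> bid_on v (x i) + d"
      using x that by (auto simp: opt_allocs_def split d_def)
    then have "f (bid_on v (y i)) \<le> f (bid_on v (x i)) + d"
      using \<open>mono f\<close> f_add[OF d] by (metis monoD)
    then show ?thesis by (simp add: split bid_on_map d_def)
  qed
  then show ?thesis using x by (simp add: opt_allocs_def)
qed

lemma map_nonneg_orthant: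
  assumes "mono f" "f 0 = 0" "v \<in> nonneg_orthant"
  shows "(\<chi> k. f (v $ k)) \<in> nonneg_orthant"
proof -
  have "f 0 \<le> f (v $ k)" for k
    using assms(1,3) by (simp add: monoD nonneg_orthant_def)
  then show ?thesis using assms(2) by (simp add: nonneg_orthant_def)
qed

lemma convex_nonneg_orthant: "convex nonneg_orthant"
  by (simp add: convex_def nonneg_orthant_def)

lemma cell_eq_opt_allocs_region:
  assumes "finite N" "i \<in> N" "is_cell N K D i S"
  obtains X where "S = nonneg_orthant \<inter>
    (\<Inter>b\<in>{b. \<forall>j\<in>N - {i}. b j \<in> set_pmf (D j)}. {v. X b \<in> opt_allocs N K (b(i := v))})"
proof -
  let ?B = "{b. \<forall>j\<in>N - {i}. b j \<in> set_pmf (D j)}"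
  have good: "good_region N K D i S" using assms(3) by (simp add: is_cell_def)
  then have "\<forall>b\<in>?B. \<exists>x. \<forall>v\<in>S. x \<in> opt_allocs N K (b(i := v))"
    by (simp add: good_region_def)
  then obtain X where X: "\<forall>b\<in>?B. \<forall>v\<in>S. X b \<in> opt_allocs N K (b(i := v))"
    by (rule bchoice [elim_format]) blast
  define T where "T = nonneg_orthant \<inter> (\<Inter>b\<in>?B. {v. X b \<in> opt_allocs N K (b(i := v))})"
  have "S \<subseteq> nonneg_orthant" using good by (simp add: good_region_def)
  then have "S \<subseteq> T" using X by (auto simp: T_def)
  moreover have "good_region N K D i T"
    unfolding good_region_def
  proof (intro conjI allI impI)
    show "T \<subseteq> nonneg_orthant" by (simp add: T_def)
    show "connected T"
      unfolding T_def using convex_opt_allocs_region[OF assms(1,2)]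
      by (intro convex_connected convex_Int convex_INT convex_nonneg_orthant)
    fix b assume "\<forall>j\<in>N - {i}. b j \<in> set_pmf (D j)"
    then show "\<exists>x. \<forall>v\<in>T. x \<in> opt_allocs N K (b(i := v))" by (auto simp: T_def)
  qed
  ultimately have "S = T" using assms(3) unfolding is_cell_def by blast
  then show ?thesis using that T_def by blast
qed

lemma cell_closed_under_bid_map:
  assumes "finite N" "i \<in> N" "is_cell N K D i S" "v \<in> S"
    and orthant: "F ` nonneg_orthant \<subseteq> nonneg_orthant"
    and opt: "\<And>b x w. \<forall>j\<in>N - {i}. b j \<in> set_pmf (D j) \<Longrightarrow>
      x \<in> opt_allocs N K (b(i := w)) \<Longrightarrow> x \<in> opt_allocs N K (b(i := F w))"
  shows "F v \<in> S"
proof -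
  obtain X where S: "S = nonneg_orthant \<inter>
      (\<Inter>b\<in>{b. \<forall>j\<in>N - {i}. b j \<in> set_pmf (D j)}. {v. X b \<in> opt_allocs N K (b(i := v))})"
    using cell_eq_opt_allocs_region[OF assms(1-3)] .
  have "F v \<in> nonneg_orthant" using \<open>v \<in> S\<close> orthant by (auto simp: S)
  moreover have "X b \<in> opt_allocs N K (b(i := F v))" if "\<forall>j\<in>N - {i}. b j \<in> set_pmf (D j)" for b
    using \<open>v \<in> S\<close> that by (intro opt) (auto simp: S)
  ultimately show ?thesis by (simp add: S)
qed

lemma cell_closed_under_lattice_perturb:
  assumes "finite N" "i \<in> N" "is_cell N K D i S" "v \<in> S" "\<bar>s\<bar> \<le> 1"
    and others: "\<And>j w k. j \<in> N - {i} \<Longrightarrow> w \<in> set_pmf (D j) \<Longrightarrow> w $ k \<in> int_multiples c"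
  shows "(\<chi> k. lattice_perturb c s (v $ k)) \<in> S"
proof (rule cell_closed_under_bid_map[OF assms(1-4)])
  note mono = mono_lattice_perturb[OF \<open>\<bar>s\<bar> \<le> 1\<close>]
  show "(\<lambda>v. \<chi> k. lattice_perturb c s (v $ k)) ` nonneg_orthant \<subseteq> nonneg_orthant"
    using map_nonneg_orthant[OF mono lattice_perturb_zero] by blast
  fix b x w
  assume b: "\<forall>j\<in>N - {i}. b j \<in> set_pmf (D j)" and x: "x \<in> opt_allocs N K (b(i := w))"
  have "b j $ k \<in> int_multiples c" if "j \<in> N - {i}" for j k
    using others[OF that bspec[OF b that]] .
  then show "x \<in> opt_allocs N K (b(i := \<chi> k. lattice_perturb c s (w $ k)))"
    using opt_allocs_map_bid[OF assms(1,2) mono lattice_perturb_zero lattice_perturb_add _ x] by blast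
qed

lemma extreme_point_not_midpoint:
  assumes "p extreme_point_of S" "a \<in> S" "b \<in> S" "midpoint a b = p"
  shows "a = b"
  using assms midpoint_in_open_segment unfolding extreme_point_of_def by metis

theorem lemma1:
  fixes M :: "'g set" and N :: "'n set" and K :: "'n \<Rightarrow> 'r::finite \<Rightarrow> 'g set"
    and D :: "'n \<Rightarrow> (real^'r) pmf" and c :: real and i :: 'n and p :: "real^'r"
  assumes "finite M" and "finite N"
    and "\<forall>j\<in>N. \<forall>k. K j k \<subseteq> M"
    and "\<forall>j\<in>N. finite (set_pmf (D j))"
    and "\<forall>j\<in>N. set_pmf (D j) \<subseteq> nonneg_orthant"
    and "c \<ge> 0"
    and "\<forall>j\<in>N. \<forall>v\<in>set_pmf (D j). \<forall>k. \<exists>z::int. v $ k = of_int z * c"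
    and "i \<in> N"
    and "cell_vertex N K D i p"
  shows "\<forall>k. \<exists>z::int. p $ k = of_int z * c"
proof -
  obtain S where cell: "is_cell N K D i S" and extreme: "p extreme_point_of S"
    using assms(9) by (auto simp: cell_vertex_def)
  have others: "w $ k \<in> int_multiples c" if "j \<in> N - {i}" "w \<in> set_pmf (D j)" for j w k
    using assms(7) that by (auto simp: mem_int_multiples_iff)
  let ?perturb = "\<lambda>s. \<chi> k. lattice_perturb c s (p $ k)"
  have "p $ k \<in> int_multiples c" for k
  proof (rule ccontr)
    assume "p $ k \<notin> int_multiples c"
    then have "?perturb 1 \<noteq> ?perturb (-1)"
      using lattice_perturb_neq by (auto simp: vec_eq_iff)
    moreover have "midpoint (?perturb 1) (?perturb (-1)) = p"
      using lattice_perturb_sum by (simp add: midpoint_def vec_eq_iff)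
    moreover have "p \<in> S" using extreme by (simp add: extreme_point_of_def)
    then have "?perturb 1 \<in> S" "?perturb (-1) \<in> S"
      using cell_closed_under_lattice_perturb[OF assms(2,8) cell _ _ others] by auto
    ultimately show False using extreme_point_not_midpoint[OF extreme] by blast
  qed
  then show ?thesis by (simp add: mem_int_multiples_iff)
qed

end
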